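(* Let $\mathcal{F}\subseteq\mathcal{P}(\omega)$ be a free filter. Then $C_p(\xi(\mathcal{F}),2^\omega)$ is homeomorphic to $\mathcal{F}^\omega$ (with the product topology).
   Context: For a free filter $\mathcal{F}$ on $\omega$ (i.e., containing all cofinite sets), $\xi(\mathcal{F})$ is the space $\omega\cup\{\infty\}$ in which every point of $\omega$ is isolated and the neighborhoods of $\infty$ are the sets $\{\infty\}\cup A$ with $A\in\mathcal{F}$. For a space $X$, $C_p(X,2^\omega)$ is the set of continuous functions $X\to 2^\omega$ with the topology of pointwise convergence (subspace of $(2^\omega)^X$). $\mathcal{F}$ carries the subspace topology of the Cantor set $2^\omega\cong\mathcal{P}(\omega)$ (subsets identified with characteristic functions). *)

theory Defs
  imports "HOL-Analysis.Analysis"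
begin

definition filter_sets :: "nat filter \<Rightarrow> nat set set" where
  "filter_sets F = {A. eventually (\<lambda>n. n \<in> A) F}"

text \<open>The space xi(F) on omega + {infinity}; None plays the role of infinity,
  Some n the point n of omega.\<close>
definition xi_space :: "nat filter \<Rightarrow> nat option topology" where
  "xi_space F = topology (\<lambda>U. None \<in> U \<longrightarrow> (\<exists>A \<in> filter_sets F. Some ` A \<subseteq> U))"

definition cantor_space :: "(nat \<Rightarrow> bool) topology" where
  "cantor_space = product_topology (\<lambda>_. discrete_topology UNIV) UNIV"

definition Cp_cantor :: "'a topology \<Rightarrow> ('a \<Rightarrow> nat \<Rightarrow> bool) topology" where
  "Cp_cantor X = subtopology (product_topology (\<lambda>_. cantor_space) (topspace X))
                   {f \<in> extensional (topspace X). continuous_map X cantor_space f}"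

text \<open>A family of subsets of omega with the subspace topology of the Cantor set
  (sets identified with characteristic functions).\<close>
definition family_space :: "nat set set \<Rightarrow> (nat \<Rightarrow> bool) topology" where
  "family_space \<F> = subtopology cantor_space ((\<lambda>A n. n \<in> A) ` \<F>)"

end

theory Submission
  imports Defs
begin

text \<open>A map f from xi(F) to the Cantor set is continuous iff for every coordinate k the
  agreement set {n. f(n)(k) = f(\<infinity>)(k)} belongs to F. So f is described by the sequence of its
  agreement sets together with the bits f(\<infinity>)(k). Because F is free, whether 0 belongs to a set
  does not affect its membership in F, so the point 0 of the agreement sets is free to carry these
  bits: the code of f has as its j-th component the j-th agreement set, except that at 0 the
  component 2k records f(\<infinity>)(k) and the component 2k+1 records whether f(0)(k) = f(\<infinity>)(k).
  This is a bijection of C_p(xi(F), 2^\<omega>) onto F^\<omega>, and it and its inverse are continuous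
  because each coordinate of either depends on at most two coordinates of the argument.\<close>

lemma ex_filter_sets_image_subset_iff:
  "(\<exists>A \<in> filter_sets F. f ` A \<subseteq> U) \<longleftrightarrow> eventually (\<lambda>n. f n \<in> U) F"
  unfolding filter_sets_def by (auto elim!: eventually_mono intro: exI[of _ "{n. f n \<in> U}"])

lemma openin_xi_space:
  "openin (xi_space F) U \<longleftrightarrow> (None \<in> U \<longrightarrow> eventually (\<lambda>n. Some n \<in> U) F)"
proof -
  let ?open = "\<lambda>U. None \<in> U \<longrightarrow> eventually (\<lambda>n. Some n \<in> U) F"
  have "?open (S \<inter> T)" if "?open S" and "?open T" for S T
    using that by (auto intro: eventually_conj)
  moreover have "?open (\<Union>\<K>)" if "\<forall>K\<in>\<K>. ?open K" for \<K>
  proof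
    assume "None \<in> \<Union>\<K>"
    then obtain K where "K \<in> \<K>" and "None \<in> K"
      by blast
    with that have "eventually (\<lambda>n. Some n \<in> K) F"
      by blast
    then show "eventually (\<lambda>n. Some n \<in> \<Union>\<K>) F"
      by (rule eventually_mono) (use \<open>K \<in> \<K>\<close> in blast)
  qed
  ultimately have "istopology ?open"
    unfolding istopology_def by blast
  then show ?thesis
    unfolding xi_space_def ex_filter_sets_image_subset_iff by simp
qed

lemma topspace_xi_space [simp]: "topspace (xi_space F) = UNIV"
proof -
  have "openin (xi_space F) UNIV"
    by (simp add: openin_xi_space)
  then show ?thesis
    using openin_subset by blast
qed

lemma continuous_map_xi_space_discrete:
  "continuous_map (xi_space F) (discrete_topology UNIV) g \<longleftrightarrow>
   eventually (\<lambda>n. g (Some n) = g None) F"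
proof
  assume "continuous_map (xi_space F) (discrete_topology UNIV) g"
  then have "openin (xi_space F) {x \<in> topspace (xi_space F). g x \<in> {g None}}"
    by (rule openin_continuous_map_preimage) simp
  then show "eventually (\<lambda>n. g (Some n) = g None) F"
    unfolding openin_xi_space by simp
next
  assume "eventually (\<lambda>n. g (Some n) = g None) F"
  then show "continuous_map (xi_space F) (discrete_topology UNIV) g"
    unfolding continuous_map_def openin_xi_space by (auto elim: eventually_mono)
qed

lemma topspace_cantor_space [simp]: "topspace cantor_space = UNIV"
  unfolding cantor_space_def by (simp add: PiE_UNIV_domain)

lemma continuous_map_cantor_space_iff:
  "continuous_map X cantor_space f \<longleftrightarrow> (\<forall>k. continuous_map X (discrete_topology UNIV) (\<lambda>x. f x k))"
  unfolding cantor_space_def by (rule continuous_map_componentwise_UNIV)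

lemma continuous_map_xi_space_cantor_space:
  "continuous_map (xi_space F) cantor_space f \<longleftrightarrow> (\<forall>k. eventually (\<lambda>n. f (Some n) k = f None k) F)"
  by (simp add: continuous_map_cantor_space_iff continuous_map_xi_space_discrete)

lemma continuous_map_discrete_combine:
  assumes "continuous_map X (discrete_topology UNIV) p"
    and "continuous_map X (discrete_topology UNIV) q"
  shows "continuous_map X (discrete_topology UNIV) (\<lambda>x. h (p x) (q x))"
proof -
  have "continuous_map X (prod_topology (discrete_topology UNIV) (discrete_topology UNIV))
      (\<lambda>x. (p x, q x))"
    using assms by (rule continuous_map_pairedI)
  then have "continuous_map X (discrete_topology UNIV) (\<lambda>x. (p x, q x))"
    by (simp add: prod_topology_discrete_topology[symmetric])
  from continuous_map_compose[OF this, of "discrete_topology UNIV" "case_prod h"]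
  show ?thesis by (simp add: o_def)
qed

lemma eventually_cong_cofinite:
  assumes "F \<le> cofinite" and "finite {x. P x \<noteq> Q x}"
  shows "eventually P F \<longleftrightarrow> eventually Q F"
proof -
  have "eventually (\<lambda>x. P x = Q x) cofinite"
    using assms(2) by (simp add: eventually_cofinite)
  then have "eventually (\<lambda>x. P x = Q x) F"
    by (rule filter_leD[OF assms(1)])
  then show ?thesis by (rule eventually_subst)
qed

lemma topspace_Cp_cantor_xi_space:
  "topspace (Cp_cantor (xi_space F)) = {f. \<forall>k. eventually (\<lambda>n. f (Some n) k = f None k) F}"
  by (auto simp: Cp_cantor_def PiE_UNIV_domain continuous_map_xi_space_cantor_space)

lemma image_indicator_filter_sets:
  "(\<lambda>A n. n \<in> A) ` filter_sets F = {b. eventually b F}"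
proof (intro set_eqI iffI)
  fix b :: "nat \<Rightarrow> bool"
  assume "b \<in> {b. eventually b F}"
  then have "Collect b \<in> filter_sets F"
    by (simp add: filter_sets_def)
  then show "b \<in> (\<lambda>A n. n \<in> A) ` filter_sets F"
    by (rule rev_image_eqI) simp
qed (auto simp: filter_sets_def)

lemma continuous_map_Cp_cantor_eval:
  assumes "x \<in> topspace X"
  shows "continuous_map (Cp_cantor X) (discrete_topology UNIV) (\<lambda>f. f x k)"
proof -
  have "continuous_map (product_topology (\<lambda>_. cantor_space) (topspace X)) cantor_space (\<lambda>f. f x)"
    using assms by (rule continuous_map_product_projection)
  then show ?thesis
    unfolding Cp_cantor_def
    by (intro continuous_map_from_subtopology)
       (simp add: continuous_map_cantor_space_iff)
qed

lemma continuous_map_family_space_eval: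
  "continuous_map (family_space \<F>) (discrete_topology UNIV) (\<lambda>b. b n)"
  unfolding family_space_def cantor_space_def
  by (rule continuous_map_from_subtopology) (rule continuous_map_product_projection, simp)

lemma continuous_map_product_family_space_eval:
  "continuous_map (product_topology (\<lambda>_. family_space \<F>) I) (discrete_topology UNIV) (\<lambda>a. a i n)"
  if "i \<in> I"
  using continuous_map_compose[OF continuous_map_product_projection[OF that]
      continuous_map_family_space_eval]
  by (simp add: o_def)

definition xi_encode :: "(nat option \<Rightarrow> nat \<Rightarrow> bool) \<Rightarrow> nat \<Rightarrow> nat \<Rightarrow> bool" where
  "xi_encode f j n =
     (if n = 0 then (if even j then f None (j div 2) else f (Some 0) (j div 2) = f None (j div 2))
      else f (Some n) j = f None j)"

definition xi_decode :: "(nat \<Rightarrow> nat \<Rightarrow> bool) \<Rightarrow> nat option \<Rightarrow> nat \<Rightarrow> bool" where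
  "xi_decode a x k =
     (case x of
       None \<Rightarrow> a (2 * k) 0
     | Some n \<Rightarrow> if n = 0 then a (2 * k + 1) 0 = a (2 * k) 0 else a k n = a (2 * k) 0)"

lemma xi_decode_encode: "xi_decode (xi_encode f) = f"
proof (intro ext)
  fix x k
  show "xi_decode (xi_encode f) x k = f x k"
    by (cases x) (auto simp: xi_decode_def xi_encode_def)
qed

lemma xi_encode_decode: "xi_encode (xi_decode a) = a"
proof (intro ext)
  fix j n
  show "xi_encode (xi_decode a) j n = a j n"
  proof (cases "n = 0")
    case True
    then show ?thesis
      by (cases "even j") (auto simp: xi_decode_def xi_encode_def elim!: evenE oddE)
  qed (auto simp: xi_decode_def xi_encode_def)
qed

lemma continuous_map_xi_encode:
  assumes "F \<le> cofinite"
  shows "continuous_map (Cp_cantor (xi_space F))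
           (product_topology (\<lambda>_. family_space (filter_sets F)) UNIV) xi_encode"
  unfolding continuous_map_componentwise_UNIV
proof
  fix j
  have "continuous_map (Cp_cantor (xi_space F)) cantor_space (\<lambda>f. xi_encode f j)"
    unfolding continuous_map_cantor_space_iff xi_encode_def
    by (auto intro!: continuous_map_discrete_combine[where h = "(=)"] continuous_map_Cp_cantor_eval)
  moreover have "eventually (xi_encode f j) F" if "f \<in> topspace (Cp_cantor (xi_space F))" for f
  proof -
    have "eventually (xi_encode f j) F \<longleftrightarrow> eventually (\<lambda>n. f (Some n) j = f None j) F"
      by (rule eventually_cong_cofinite[OF assms])
         (auto simp: xi_encode_def intro: finite_subset[of _ "{0}"])
    with that show ?thesis
      by (simp add: topspace_Cp_cantor_xi_space)
  qed
  ultimately show "continuous_map (Cp_cantor (xi_space F)) (family_space (filter_sets F))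
      (\<lambda>f. xi_encode f j)"
    unfolding family_space_def image_indicator_filter_sets
    by (auto intro: continuous_map_into_subtopology)
qed

lemma continuous_map_xi_decode:
  assumes "F \<le> cofinite"
  shows "continuous_map (product_topology (\<lambda>_. family_space (filter_sets F)) UNIV)
           (Cp_cantor (xi_space F)) xi_decode"
  unfolding Cp_cantor_def topspace_xi_space
proof (rule continuous_map_into_subtopology)
  let ?T = "product_topology (\<lambda>_::nat. family_space (filter_sets F)) UNIV"
  show "continuous_map ?T (product_topology (\<lambda>_. cantor_space) UNIV) xi_decode"
    unfolding continuous_map_componentwise_UNIV continuous_map_cantor_space_iff
  proof (intro allI)
    fix x k
    show "continuous_map ?T (discrete_topology UNIV) (\<lambda>a. xi_decode a x k)"
      unfolding xi_decode_def
      by (cases x) (auto intro!: continuous_map_discrete_combine[where h = "(=)"]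
          continuous_map_product_family_space_eval)
  qed
  show "xi_decode \<in> topspace ?T \<rightarrow>
      {f \<in> extensional UNIV. continuous_map (xi_space F) cantor_space f}"
  proof
    fix a
    assume "a \<in> topspace ?T"
    then have "eventually (a k) F" for k
      by (auto simp: family_space_def image_indicator_filter_sets PiE_UNIV_domain)
    moreover have "eventually (\<lambda>n. xi_decode a (Some n) k = xi_decode a None k) F
        \<longleftrightarrow> eventually (a k) F" for k
      by (rule eventually_cong_cofinite[OF assms])
         (auto simp: xi_decode_def intro: finite_subset[of _ "{0}"])
    ultimately show "xi_decode a \<in> {f \<in> extensional UNIV. continuous_map (xi_space F) cantor_space f}"
      by (simp add: continuous_map_xi_space_cantor_space)
  qed
qed

theorem mainTheorem6:
  fixes F :: "nat filter"
  assumes "F \<noteq> bot" and "F \<le> cofinite"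
  shows "Cp_cantor (xi_space F) homeomorphic_space
         product_topology (\<lambda>_::nat. family_space (filter_sets F)) UNIV"
proof -
  have "homeomorphic_maps (Cp_cantor (xi_space F))
      (product_topology (\<lambda>_. family_space (filter_sets F)) UNIV) xi_encode xi_decode"
    unfolding homeomorphic_maps_def
    using continuous_map_xi_encode[OF assms(2)] continuous_map_xi_decode[OF assms(2)]
    by (simp add: xi_decode_encode xi_encode_decode)
  then show ?thesis
    unfolding homeomorphic_space_def by blast
qed

end
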